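(* $\inf S = 1$, where $S$ is the set of $\beta>1$ with $S_\beta^+ = S_\beta^-$ (notation as in the context).
   Context: For $\beta>1$ let $f_\beta\colon[0,1]\to[0,1)$, $f_\beta(x)=\beta x \bmod 1$, and for $x\in[0,1]$ let $d(x,\beta)=(d_k(x,\beta))_{k\ge1}$ with $d_k(x,\beta)=\lfloor \beta f_\beta^{k-1}(x)\rfloor$. Let $S_\beta^+$ be the closure, in the product topology on $\{0,1,\dots,\lfloor\beta\rfloor\}^{\mathbb N}$, of $\{d(x,\beta): x\in[0,1)\}$. Let $S_\beta$ be the set of bi-infinite sequences $(\ldots,a_{-1},a_0,a_1,\ldots)$ such that $(a_n,a_{n+1},\ldots)\in S_\beta^+$ for every $n\in\mathbb Z$. Let $S_\beta^-$ be the set of one-sided sequences $(b_1,b_2,\ldots)$ such that the bi-infinite sequence $(\ldots,b_2,b_1,0,0,\ldots)$ (with $b_1$ at position $0$, $b_2$ at position $-1$, etc., and zeros at positions $1,2,\dots$) belongs to $S_\beta$; equivalently, there exists $(a_1,a_2,\ldots)\in S_\beta^+$ with $(\ldots,b_2,b_1,a_1,a_2,\ldots)\in S_\beta$. Define $S=\{\beta>1 : S_\beta^+=S_\beta^-\}$. *)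

theory Defs
  imports "HOL-Analysis.Analysis"
begin

definition beta_map :: "real \<Rightarrow> real \<Rightarrow> real" where
  "beta_map \<beta> x = \<beta> * x - of_int \<lfloor>\<beta> * x\<rfloor>"

text \<open>Digit sequence d(x,beta), indexed from 0: entry k is d_{k+1}(x,beta)
  = floor(beta * f_beta^k(x)).\<close>
definition beta_digits :: "real \<Rightarrow> real \<Rightarrow> nat \<Rightarrow> nat" where
  "beta_digits \<beta> x k = nat \<lfloor>\<beta> * (beta_map \<beta> ^^ k) x\<rfloor>"

text \<open>S_beta^+: closure in the product topology (nat discrete) of the digit
  sequences of points of [0,1).  (The alphabet space is closed in nat^N, so
  the closure is the same as within it.)\<close>
definition S_plus :: "real \<Rightarrow> (nat \<Rightarrow> nat) set" where
  "S_plus \<beta> = closure (beta_digits \<beta> ` {0..<1})"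

definition S_bi :: "real \<Rightarrow> (int \<Rightarrow> nat) set" where
  "S_bi \<beta> = {a. \<forall>n::int. (\<lambda>k::nat. a (n + int k)) \<in> S_plus \<beta>}"

text \<open>S_beta^-: sequences (b_1,b_2,...) (indexed from 0) such that
  (...,b_2,b_1,0,0,...) with b_1 at position 0 lies in S_beta.\<close>
definition S_minus :: "real \<Rightarrow> (nat \<Rightarrow> nat) set" where
  "S_minus \<beta> = {b. (\<lambda>i::int. if i \<le> 0 then b (nat (- i)) else 0) \<in> S_bi \<beta>}"

definition S_set :: "real set" where
  "S_set = {\<beta>. \<beta> > 1 \<and> S_plus \<beta> = S_minus \<beta>}"

end

theory Submission
  imports Defs
begin

text \<open>If \<open>\<beta>\<^sup>m (\<beta> - 1) = 1\<close>, i.e. \<open>1 = 1/\<beta> + 1/\<beta>\<^sup>m\<^sup>+\<^sup>1\<close>, then the \<open>\<beta>\<close>-expansion of 1 is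
  \<open>1 0\<^sup>m\<^sup>-\<^sup>1 1\<close> and \<open>S\<^sub>\<beta>\<^sup>+\<close> is the shift of 0-1 sequences in which any two ones are separated
  by at least \<open>m\<close> zeros. This condition is local and invariant under reversal, so it also
  describes the left-infinite sequences \<open>S\<^sub>\<beta>\<^sup>-\<close>; hence every such \<open>\<beta>\<close> lies in \<open>S\<close>, and these
  roots tend to 1 as \<open>m \<rightarrow> \<infinity>\<close>.\<close>

definition min_gap_seqs :: "nat \<Rightarrow> (nat \<Rightarrow> nat) set" where
  "min_gap_seqs m = {s. (\<forall>i. s i \<le> 1) \<and> (\<forall>i j. 1 \<le> j \<longrightarrow> j \<le> m \<longrightarrow> s i = 0 \<or> s (i + j) = 0)}"

definition zero_extension :: "(nat \<Rightarrow> nat) \<Rightarrow> int \<Rightarrow> nat" where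
  "zero_extension c i = (if i \<le> 0 then c (nat (- i)) else 0)"

definition beta_sum :: "real \<Rightarrow> nat \<Rightarrow> (nat \<Rightarrow> nat) \<Rightarrow> real" where
  "beta_sum \<beta> N s = (\<Sum>i<N. real (s i) / \<beta> ^ Suc i)"

lemma tendsto_fun_componentwise:
  fixes f :: "'i \<Rightarrow> 'a \<Rightarrow> 'b::topological_space"
  assumes "\<And>x. ((\<lambda>n. f n x) \<longlongrightarrow> l x) F"
  shows "(f \<longlongrightarrow> l) F"
proof -
  have "limitin (product_topology (\<lambda>_. euclidean) UNIV) f l F"
    using assms by (simp add: limitin_componentwise)
  then show ?thesis by (simp add: euclidean_product_topology)
qed

lemma min_gap_seqs_le_1: "s \<in> min_gap_seqs m \<Longrightarrow> s i \<le> 1"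
  unfolding min_gap_seqs_def by simp

lemma min_gap_seqsD:
  "s \<in> min_gap_seqs m \<Longrightarrow> 1 \<le> j \<Longrightarrow> j \<le> m \<Longrightarrow> s i = 0 \<or> s (i + j) = 0"
  unfolding min_gap_seqs_def by simp

lemma closed_min_gap_seqs: "closed (min_gap_seqs m)"
  unfolding min_gap_seqs_def
  by (intro closed_Collect_conj closed_Collect_all closed_Collect_imp closed_Collect_disj
      closed_Collect_le closed_Collect_eq continuous_on_product_coordinates continuous_on_const
      open_Collect_const)

lemma min_gap_seqs_shift:
  assumes "s \<in> min_gap_seqs m"
  shows "(\<lambda>i. s (i + k)) \<in> min_gap_seqs m"
  unfolding min_gap_seqs_def
proof (intro CollectI conjI allI impI)
  fix i show "s (i + k) \<le> 1" using min_gap_seqs_le_1[OF assms] .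
next
  fix i j :: nat assume "1 \<le> j" "j \<le> m"
  then show "s (i + k) = 0 \<or> s (i + j + k) = 0"
    using min_gap_seqsD[OF assms, of j "i + k"] by (simp add: ac_simps)
qed

lemma min_gap_seqs_Suc_shift: "s \<in> min_gap_seqs m \<Longrightarrow> (\<lambda>i. s (Suc i)) \<in> min_gap_seqs m"
  using min_gap_seqs_shift[of s m 1] by simp

lemma tails_in_min_gap_seqs_iff:
  fixes a :: "int \<Rightarrow> nat"
  shows "(\<forall>n. (\<lambda>k. a (n + int k)) \<in> min_gap_seqs m) \<longleftrightarrow>
    (\<forall>i. a i \<le> 1) \<and> (\<forall>i j. 1 \<le> j \<longrightarrow> j \<le> m \<longrightarrow> a i = 0 \<or> a (i + int j) = 0)"
  (is "?tails \<longleftrightarrow> ?local")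
proof
  assume ?tails
  then have "(\<lambda>k. a (i + int k)) \<in> min_gap_seqs m" for i by blast
  then show ?local
    using min_gap_seqs_le_1[of _ m 0] min_gap_seqsD[of _ m _ 0] by fastforce
next
  assume local: ?local
  show ?tails
    unfolding min_gap_seqs_def
  proof (intro allI CollectI conjI impI)
    fix n :: int and i j :: nat assume "1 \<le> j" "j \<le> m"
    then show "a (n + int i) = 0 \<or> a (n + int (i + j)) = 0"
      using local by (simp add: add.assoc [symmetric])
  qed (use local in blast)
qed

lemma zero_extension_neg: "zero_extension c (- int i) = c i"
  by (simp add: zero_extension_def)

lemma zero_extension_min_gap_iff:
  "(\<forall>i. zero_extension c i \<le> 1) \<and>
   (\<forall>i j. 1 \<le> j \<longrightarrow> j \<le> m \<longrightarrow> zero_extension c i = 0 \<or> zero_extension c (i + int j) = 0)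
   \<longleftrightarrow> c \<in> min_gap_seqs m"
  (is "?ext \<longleftrightarrow> _")
proof
  assume ext: ?ext
  have "c i = 0 \<or> c (i + j) = 0" if "1 \<le> j" "j \<le> m" for i j
  proof -
    have "- int (i + j) + int j = - int i" by simp
    then show ?thesis
      using ext[THEN conjunct2, THEN spec[of _ "- int (i + j)"], THEN spec[of _ j]] that
      by (simp only: zero_extension_neg) auto
  qed
  moreover have "c i \<le> 1" for i
    using ext zero_extension_neg[of c i] by metis
  ultimately show "c \<in> min_gap_seqs m" unfolding min_gap_seqs_def by auto
next
  assume c: "c \<in> min_gap_seqs m"
  have "c (nat (- i)) = 0 \<or> c (nat (- (i + int j))) = 0"
    if "1 \<le> j" "j \<le> m" "i + int j \<le> 0" for i j
  proof -
    have "nat (- i) = nat (- (i + int j)) + j" using that(3) by arith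
    then show ?thesis using min_gap_seqsD[OF c that(1,2), of "nat (- (i + int j))"] by auto
  qed
  then show ?ext using min_gap_seqs_le_1[OF c] by (auto simp: zero_extension_def)
qed

lemma beta_map_range: "0 \<le> beta_map \<beta> x" "beta_map \<beta> x < 1"
  unfolding beta_map_def by linarith+

lemma beta_digits_0: "beta_digits \<beta> x 0 = nat \<lfloor>\<beta> * x\<rfloor>"
  unfolding beta_digits_def by simp

lemma beta_digits_add: "beta_digits \<beta> x (k + i) = beta_digits \<beta> ((beta_map \<beta> ^^ k) x) i"
  unfolding beta_digits_def by (simp add: funpow_add add.commute[of k])

lemma beta_digits_Suc: "beta_digits \<beta> x (Suc k) = beta_digits \<beta> (beta_map \<beta> x) k"
  using beta_digits_add[of \<beta> x 1 k] by simp

lemma iterate_beta_map_range: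
  "0 \<le> x \<Longrightarrow> x < 1 \<Longrightarrow> 0 \<le> (beta_map \<beta> ^^ k) x \<and> (beta_map \<beta> ^^ k) x < 1"
  by (cases k) (auto simp: beta_map_range)

lemma beta_digits_le_1:
  assumes "0 < \<beta>" "\<beta> \<le> 2" "0 \<le> x" "x < 1"
  shows "beta_digits \<beta> x k \<le> 1"
proof -
  define y where "y = (beta_map \<beta> ^^ k) x"
  have "0 \<le> y" "y < 1" using iterate_beta_map_range assms(3,4) unfolding y_def by blast+
  then have "\<beta> * y < \<beta>" using mult_strict_left_mono[of y 1 \<beta>] assms(1) by simp
  moreover have "beta_digits \<beta> x k = nat \<lfloor>\<beta> * y\<rfloor>"
    using beta_digits_add[of \<beta> x k 0] by (simp add: beta_digits_0 y_def)
  ultimately show ?thesis using assms(2) by (simp add: nat_le_iff)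
qed

lemma iterate_beta_map_small:
  assumes "1 \<le> \<beta>" "0 \<le> y" "\<beta> ^ n * y < 1" "i \<le> n"
  shows "(beta_map \<beta> ^^ i) y = \<beta> ^ i * y"
  using assms(4)
proof (induction i)
  case (Suc i)
  have "\<beta> ^ Suc i * y \<le> \<beta> ^ n * y"
    using Suc.prems assms(1,2) by (intro mult_right_mono power_increasing) auto
  then have "\<lfloor>\<beta> ^ Suc i * y\<rfloor> = 0" using assms(1-3) by (intro floor_unique) auto
  then show ?case using Suc by (simp add: beta_map_def mult.assoc)
qed simp

lemma beta_digits_small:
  assumes "1 \<le> \<beta>" "0 \<le> y" "\<beta> ^ n * y < 1" "i < n"
  shows "beta_digits \<beta> y i = 0"
proof -
  have "\<beta> ^ Suc i * y \<le> \<beta> ^ n * y"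
    using assms by (intro mult_right_mono power_increasing) auto
  then have "\<lfloor>\<beta> * (\<beta> ^ i * y)\<rfloor> = 0" using assms(1-3) by (intro floor_unique) auto
  then show ?thesis
    using iterate_beta_map_small[OF assms(1-3), of i] assms(4) by (simp add: beta_digits_def)
qed

lemma beta_sum_nonneg: "0 < \<beta> \<Longrightarrow> 0 \<le> beta_sum \<beta> N s"
  unfolding beta_sum_def by (intro sum_nonneg) auto

lemma beta_sum_Suc: "beta_sum \<beta> (Suc N) s = (s 0 + beta_sum \<beta> N (\<lambda>i. s (Suc i))) / \<beta>"
  unfolding beta_sum_def sum.lessThan_Suc_shift
  by (simp add: add_divide_distrib sum_divide_distrib mult_ac)

lemma beta_sum_mono_length:
  assumes "0 < \<beta>" "N \<le> N'"
  shows "beta_sum \<beta> N s \<le> beta_sum \<beta> N' s"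
  unfolding beta_sum_def using assms by (intro sum_mono2) auto

lemma beta_sum_leading_zeros:
  assumes "\<forall>i<k. s i = 0"
  shows "beta_sum \<beta> (k + N) s = beta_sum \<beta> N (\<lambda>i. s (i + k)) / \<beta> ^ k"
  using assms
proof (induction k arbitrary: s)
  case (Suc k)
  have "beta_sum \<beta> (k + N) (\<lambda>i. s (Suc i)) = beta_sum \<beta> N (\<lambda>i. s (i + Suc k)) / \<beta> ^ k"
    using Suc.IH[of "\<lambda>i. s (Suc i)"] Suc.prems by simp
  then show ?case using Suc.prems by (simp add: beta_sum_Suc)
qed simp

lemma beta_sum_Suc_greedy_step:
  assumes "0 < \<beta>" "beta_sum \<beta> N (\<lambda>i. s (Suc i)) < 1"
  shows "beta_digits \<beta> (beta_sum \<beta> (Suc N) s) 0 = s 0"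
    and "beta_map \<beta> (beta_sum \<beta> (Suc N) s) = beta_sum \<beta> N (\<lambda>i. s (Suc i))"
proof -
  have "\<beta> * beta_sum \<beta> (Suc N) s = s 0 + beta_sum \<beta> N (\<lambda>i. s (Suc i))"
    using assms(1) by (simp add: beta_sum_Suc)
  moreover have "\<lfloor>s 0 + beta_sum \<beta> N (\<lambda>i. s (Suc i))\<rfloor> = s 0"
    using assms beta_sum_nonneg by (intro floor_unique) auto
  ultimately show "beta_digits \<beta> (beta_sum \<beta> (Suc N) s) 0 = s 0"
    and "beta_map \<beta> (beta_sum \<beta> (Suc N) s) = beta_sum \<beta> N (\<lambda>i. s (Suc i))"
    by (simp_all add: beta_digits_0 beta_map_def)
qed

locale simple_parry =
  fixes \<beta> :: real and m :: nat
  assumes gt_1: "1 < \<beta>" and lt_2: "\<beta> < 2" and expansion_of_1: "\<beta> ^ m * (\<beta> - 1) = 1"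
begin

lemma beta_sum_lt_1: "s \<in> min_gap_seqs m \<Longrightarrow> beta_sum \<beta> N s < 1"
proof (induction N arbitrary: s)
  case 0
  then show ?case by (simp add: beta_sum_def)
next
  case (Suc N)
  let ?t = "\<lambda>i. s (Suc i)"
  have t: "?t \<in> min_gap_seqs m" using Suc.prems by (rule min_gap_seqs_Suc_shift)
  consider "s 0 = 0" | "s 0 = 1" using min_gap_seqs_le_1[OF Suc.prems, of 0] by linarith
  then show ?case
  proof cases
    case 1
    then show ?thesis using Suc.IH[OF t] gt_1 by (simp add: beta_sum_Suc)
  next
    case 2
    have "\<forall>i<m. ?t i = 0" using min_gap_seqsD[OF Suc.prems, of "Suc _" 0] 2 by auto
    then have "beta_sum \<beta> N ?t \<le> beta_sum \<beta> N (\<lambda>i. ?t (i + m)) / \<beta> ^ m"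
      using beta_sum_mono_length[of \<beta> N "m + N" ?t] beta_sum_leading_zeros[of m ?t \<beta> N] gt_1
      by simp
    also have "\<dots> < 1 / \<beta> ^ m"
      using Suc.IH[OF min_gap_seqs_shift[OF t]] gt_1 by (simp add: divide_strict_right_mono)
    also have "\<dots> = \<beta> - 1" using expansion_of_1 gt_1 by (simp add: field_simps)
    finally show ?thesis using 2 gt_1 by (simp add: beta_sum_Suc divide_less_eq)
  qed
qed

lemma beta_digits_beta_sum:
  "s \<in> min_gap_seqs m \<Longrightarrow> k < N \<Longrightarrow> beta_digits \<beta> (beta_sum \<beta> N s) k = s k"
proof (induction k arbitrary: s N)
  case 0
  then obtain N' where "N = Suc N'" by (cases N) auto
  then show ?case
    using beta_sum_Suc_greedy_step(1) beta_sum_lt_1[OF min_gap_seqs_Suc_shift[OF 0(1)]] gt_1 by simp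
next
  case (Suc k)
  then obtain N' where N: "N = Suc N'" by (cases N) auto
  have t: "(\<lambda>i. s (Suc i)) \<in> min_gap_seqs m" using Suc.prems(1) by (rule min_gap_seqs_Suc_shift)
  show ?case
    using beta_sum_Suc_greedy_step(2)[OF _ beta_sum_lt_1[OF t]] Suc.IH[OF t, of N'] Suc.prems gt_1 N
    by (simp add: beta_digits_Suc)
qed

lemma beta_digits_in_min_gap_seqs:
  assumes x: "0 \<le> x" "x < 1"
  shows "beta_digits \<beta> x \<in> min_gap_seqs m"
proof -
  have le_1: "beta_digits \<beta> x k \<le> 1" for k
    using beta_digits_le_1 gt_1 lt_2 x by simp
  have zero_after_one: "beta_digits \<beta> x (k + j) = 0"
    if one: "beta_digits \<beta> x k = 1" and j: "1 \<le> j" "j \<le> m" for k j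
  proof -
    \<comment> \<open>after a digit 1 the orbit lies below \<open>\<beta> - 1 = \<beta>\<^sup>-\<^sup>m\<close>\<close>
    define y where "y = (beta_map \<beta> ^^ k) x"
    have y: "0 \<le> y" "y < 1" using iterate_beta_map_range x unfolding y_def by blast+
    have "\<lfloor>\<beta> * y\<rfloor> = 1"
      using one beta_digits_add[of \<beta> x k 0] y gt_1 by (simp add: beta_digits_0 y_def)
    moreover have "\<beta> * y < \<beta>" using mult_strict_left_mono[of y 1 \<beta>] y gt_1 by simp
    ultimately have "beta_map \<beta> y < \<beta> - 1" by (simp add: beta_map_def)
    then have "\<beta> ^ m * beta_map \<beta> y < \<beta> ^ m * (\<beta> - 1)"
      using gt_1 by (intro mult_strict_left_mono) auto
    then have "\<beta> ^ m * beta_map \<beta> y < 1" using expansion_of_1 by simp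
    then have "beta_digits \<beta> (beta_map \<beta> y) (j - 1) = 0"
      using beta_digits_small[of \<beta> _ m] beta_map_range gt_1 j by simp
    moreover have "beta_digits \<beta> x (k + j) = beta_digits \<beta> x (Suc k + (j - 1))"
      using j by simp
    ultimately show ?thesis by (simp only: beta_digits_add y_def funpow.simps(2) o_apply)
  qed
  show ?thesis
    unfolding min_gap_seqs_def
  proof (intro CollectI conjI allI impI)
    fix i j :: nat assume "1 \<le> j" "j \<le> m"
    then show "beta_digits \<beta> x i = 0 \<or> beta_digits \<beta> x (i + j) = 0"
      using le_1[of i] zero_after_one[of i j] by linarith
  qed (rule le_1)
qed

lemma S_plus_eq: "S_plus \<beta> = min_gap_seqs m"
proof
  show "S_plus \<beta> \<subseteq> min_gap_seqs m"
    unfolding S_plus_def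
    by (intro closure_minimal closed_min_gap_seqs) (auto intro: beta_digits_in_min_gap_seqs)
next
  show "min_gap_seqs m \<subseteq> S_plus \<beta>"
  proof
    fix s assume s: "s \<in> min_gap_seqs m"
    \<comment> \<open>the digits of the partial sums agree with \<open>s\<close> on ever longer prefixes\<close>
    define x where "x N = beta_sum \<beta> N s" for N
    have "beta_digits \<beta> (x N) \<in> beta_digits \<beta> ` {0..<1}" for N
      using beta_sum_nonneg[of \<beta> N s] beta_sum_lt_1[OF s, of N] gt_1
      unfolding x_def by (intro imageI) simp
    moreover have "(\<lambda>N. beta_digits \<beta> (x N)) \<longlonglongrightarrow> s"
    proof (rule tendsto_fun_componentwise)
      fix k
      have "\<forall>\<^sub>F N in sequentially. beta_digits \<beta> (x N) k = s k"
        using beta_digits_beta_sum[OF s] unfolding x_def eventually_sequentially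
        by (auto intro!: exI[of _ "Suc k"])
      then show "(\<lambda>N. beta_digits \<beta> (x N) k) \<longlonglongrightarrow> s k" by (rule tendsto_eventually)
    qed
    ultimately show "s \<in> S_plus \<beta>"
      unfolding S_plus_def closure_sequential by (intro exI[of _ "\<lambda>N. beta_digits \<beta> (x N)"]) simp
  qed
qed

lemma S_minus_eq: "S_minus \<beta> = min_gap_seqs m"
proof (intro set_eqI)
  fix c
  have "c \<in> S_minus \<beta> \<longleftrightarrow> (\<forall>n. (\<lambda>k. zero_extension c (n + int k)) \<in> S_plus \<beta>)"
    by (simp add: S_minus_def S_bi_def zero_extension_def)
  then show "c \<in> S_minus \<beta> \<longleftrightarrow> c \<in> min_gap_seqs m"
    unfolding S_plus_eq tails_in_min_gap_seqs_iff zero_extension_min_gap_iff .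
qed

lemma in_S_set: "\<beta> \<in> S_set"
  unfolding S_set_def using S_plus_eq S_minus_eq gt_1 by simp

end

lemma S_set_near_1:
  assumes "0 < e"
  shows "\<exists>\<beta>\<in>S_set. \<beta> \<le> 1 + e"
proof -
  define d where "d = min e (1 / 2)"
  have d: "0 < d" "d < 1" "d \<le> e" using assms by (auto simp: d_def)
  obtain m where "1 / d < (1 + d) ^ m" using real_arch_pow[of "1 + d" "1 / d"] d by auto
  then have "1 \<le> (1 + d) ^ m * ((1 + d) - 1)" using d by (simp add: field_simps)
  moreover have "\<forall>x. 1 \<le> x \<and> x \<le> 1 + d \<longrightarrow> isCont (\<lambda>x. x ^ m * (x - 1)) x"
    by (intro allI impI continuous_intros)
  ultimately obtain \<beta> where \<beta>: "1 \<le> \<beta>" "\<beta> \<le> 1 + d" "\<beta> ^ m * (\<beta> - 1) = 1"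
    using IVT[of "\<lambda>x. x ^ m * (x - 1)" 1 1 "1 + d"] d by auto
  moreover have "\<beta> \<noteq> 1" using \<beta>(3) by auto
  ultimately have "simple_parry \<beta> m" using d by unfold_locales linarith+
  then show ?thesis using simple_parry.in_S_set \<beta>(2) d(3) by (intro bexI[of _ \<beta>]) auto
qed

theorem proposition3p2:
  shows "Inf S_set = 1"
proof (rule cInf_eq_non_empty)
  show "S_set \<noteq> {}" using S_set_near_1[of 1] by auto
next
  fix x assume "x \<in> S_set"
  then show "1 \<le> x" by (simp add: S_set_def)
next
  fix y assume lb: "\<And>x. x \<in> S_set \<Longrightarrow> y \<le> x"
  show "y \<le> 1"
  proof (rule field_le_epsilon)
    fix e :: real assume "0 < e"
    then obtain \<beta> where "\<beta> \<in> S_set" "\<beta> \<le> 1 + e" using S_set_near_1 by blast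
    with lb show "y \<le> 1 + e" by (meson order_trans)
  qed
qed

end
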